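(* Let $\epsilon>0$, $E>0$ and $x=(q,p)\in\mathbb{R}^{2d}$ with $p\neq0$. (1) If $V(x)=E$, then for all $\delta>0$, $\mathbb{P}_{x}\big[\sup_{t\in[0,\delta]}V(X^{\epsilon}(t))>E\ \text{and}\ \inf_{t\in[0,\delta]}V(X^{\epsilon}(t))<E\big]=1$. (2) If $z\in\mathbb{R}^{d}$ satisfies $|q-z|^{2}+|p|^{2}=E$, then for all $\delta>0$, $\mathbb{P}_{x}\big[\sup_{t\in[0,\delta]}(|q^{\epsilon}(t)-z|^{2}+|p^{\epsilon}(t)|^{2})>E\ \text{and}\ \inf_{t\in[0,\delta]}(|q^{\epsilon}(t)-z|^{2}+|p^{\epsilon}(t)|^{2})<E\big]=1$.
   Context: Let $d\ge1$, $\gamma>0$, $U\in C^{2}(\mathbb{R}^{d},\mathbb{R})$ a double-well Morse function with $U\ge0$ and, for some $\beta>0$, $\liminf_{|q|\to\infty}\frac{\langle q,\nabla U(q)\rangle}{|q|^{2}+U(q)}>0$ and $\liminf_{|q|\to\infty}(|\nabla U(q)|-\beta\Delta U(q))>0$. For $\epsilon>0$, $X^\epsilon(t)=(q^{\epsilon}(t),p^{\epsilon}(t))$ solves $\mathrm{d}q^{\epsilon}=p^{\epsilon}\mathrm{d}t$, $\mathrm{d}p^{\epsilon}=-\nabla U(q^{\epsilon})\mathrm{d}t-\gamma p^{\epsilon}\mathrm{d}t+\sqrt{2\gamma\epsilon}\,\mathrm{d}B(t)$; $\mathbb{P}_x$ is its law started at $x$. $V(q,p)=U(q)+|p|^2/2$.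 *)

theory Defs
  imports "HOL-Analysis.Analysis" "HOL-Probability.Probability"
begin

definition brownian_motion ::
  "'w measure \<Rightarrow> (real \<Rightarrow> 'w \<Rightarrow> real^'n) \<Rightarrow> bool" where
  "brownian_motion M B \<longleftrightarrow>
     prob_space M \<and>
     (\<forall>t\<ge>0. B t \<in> borel_measurable M) \<and>
     (AE \<omega> in M. B 0 \<omega> = 0 \<and> continuous_on {0..} (\<lambda>t. B t \<omega>)) \<and>
     (\<forall>s t. 0 \<le> s \<and> s < t \<longrightarrow>
        distributed M lborel (\<lambda>\<omega>. B t \<omega> - B s \<omega>)
          (\<lambda>y. ennreal (\<Prod>i\<in>UNIV. normal_density 0 (sqrt (t - s)) (y $ i)))) \<and>
     (\<forall>(ts::nat \<Rightarrow> real) k. 0 \<le> ts 0 \<and> strict_mono ts \<longrightarrow>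
        prob_space.indep_vars M (\<lambda>_. borel) (\<lambda>i \<omega>. B (ts (Suc i)) \<omega> - B (ts i) \<omega>) {..<k})"

definition C2_with :: "(real^'n \<Rightarrow> real) \<Rightarrow> (real^'n \<Rightarrow> real^'n) \<Rightarrow> (real^'n \<Rightarrow> real^'n^'n) \<Rightarrow> bool" where
  "C2_with U gU HU \<longleftrightarrow>
     (\<forall>q. (U has_derivative (\<lambda>h. gU q \<bullet> h)) (at q)) \<and>
     (\<forall>q. (gU has_derivative (\<lambda>h. HU q *v h)) (at q)) \<and>
     continuous_on UNIV HU"

definition laplacian_of :: "(real^'n \<Rightarrow> real^'n^'n) \<Rightarrow> real^'n \<Rightarrow> real" where
  "laplacian_of HU q = (\<Sum>i\<in>UNIV. HU q $ i $ i)"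

definition local_min_pt :: "(real^'n \<Rightarrow> real) \<Rightarrow> real^'n \<Rightarrow> bool" where
  "local_min_pt U m \<longleftrightarrow> (\<exists>e>0. \<forall>y. dist y m < e \<longrightarrow> U m \<le> U y)"

definition double_well_morse :: "(real^'n \<Rightarrow> real) \<Rightarrow> (real^'n \<Rightarrow> real^'n) \<Rightarrow> (real^'n \<Rightarrow> real^'n^'n) \<Rightarrow> bool" where
  "double_well_morse U gU HU \<longleftrightarrow>
     (\<forall>q. gU q = 0 \<longrightarrow> det (HU q) \<noteq> 0) \<and> card {m. local_min_pt U m} = 2"

definition langevin_solution ::
  "'w measure \<Rightarrow> (real^'n \<Rightarrow> real^'n) \<Rightarrow> real \<Rightarrow> real \<Rightarrow> (real \<Rightarrow> 'w \<Rightarrow> real^'n)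
   \<Rightarrow> real^'n \<Rightarrow> real^'n \<Rightarrow> (real \<Rightarrow> 'w \<Rightarrow> real^'n) \<Rightarrow> (real \<Rightarrow> 'w \<Rightarrow> real^'n) \<Rightarrow> bool" where
  "langevin_solution M gU \<gamma> \<epsilon> B q0 p0 q p \<longleftrightarrow>
     (\<forall>t\<ge>0. q t \<in> borel_measurable M \<and> p t \<in> borel_measurable M) \<and>
     (AE \<omega> in M. continuous_on {0..} (\<lambda>t. q t \<omega>) \<and> continuous_on {0..} (\<lambda>t. p t \<omega>) \<and>
        (\<forall>t\<ge>0. q t \<omega> = q0 + integral {0..t} (\<lambda>s. p s \<omega>) \<and>
                p t \<omega> = p0 - integral {0..t} (\<lambda>s. gU (q s \<omega>) + \<gamma> *\<^sub>R p s \<omega>)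
                       + sqrt (2 * \<gamma> * \<epsilon>) *\<^sub>R B t \<omega>))"

end

theory Submission
  imports Defs
begin

(*
  With \<sigma> = sqrt (2 \<gamma> \<epsilon>), a solution satisfies q t = q0 + O(t) and p t = p0 + \<sigma> B t + O(t).
  Hence for an energy F q + c |p|^2 with F differentiable at q0 and c > 0,

    F (q t) + c |p t|^2 = F q0 + c |p0|^2 + 2 c \<sigma> (p0 \<bullet> B t) + O(|B t|^2 + t),

  and the energy crosses its initial level in every [0, \<delta>] once, for each K and both a = p0 and
  a = -p0, there are arbitrarily small t > 0 with K (|B t|^2 + t) < a \<bullet> B t ("fast times").
  Both parts of the theorem are the cases F = U, c = 1/2 and F = |_ - z|^2, c = 1.

  Fast times exist almost surely below every \<delta>: on a geometric grid t_k = r^2 t_(k+1) the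
  normalized increments over [t_k, t_(k+1)] are independent standard Gaussians, and if one of them
  lies in S = {y. 1 \<le> a \<bullet> y, |y| \<le> L} while |B t_k| \<le> \<Lambda> sqrt t_k, then t_(k+1) is a fast time.
  With N grid points this fails with probability at most (1 - P S)^N + N P(|G| > \<Lambda>), which is
  arbitrarily small for suitable N and then \<Lambda>.
*)

section \<open>Standard Gaussian vectors and Brownian increments\<close>

definition std_normal_vec :: "(real^'n) measure" where
  "std_normal_vec = density lborel (\<lambda>y. ennreal (\<Prod>i\<in>UNIV. normal_density 0 1 (y $ i)))"

lemma sets_std_normal_vec [simp, measurable_cong]: "sets std_normal_vec = sets borel"
  by (simp add: std_normal_vec_def)

lemma space_std_normal_vec [simp]: "space std_normal_vec = UNIV"
  by (simp add: std_normal_vec_def)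

lemma emeasure_std_normal_vec_ball_pos:
  fixes y :: "real^'n"
  assumes "0 < r"
  shows "0 < emeasure std_normal_vec (ball y r)"
proof (rule ccontr)
  define f where "f x = (\<Prod>i\<in>UNIV. normal_density 0 1 (x $ i))" for x :: "real^'n"
  have f_pos: "0 < f x" for x
    unfolding f_def by (intro prod_pos) (simp add: normal_density_pos)
  have [measurable]: "f \<in> borel_measurable borel"
    unfolding f_def normal_density_def by measurable
  assume "\<not> 0 < emeasure std_normal_vec (ball y r)"
  then have "(\<integral>\<^sup>+x. ennreal (f x) * indicator (ball y r) x \<partial>lborel) = 0"
    by (simp add: std_normal_vec_def emeasure_density f_def)
  then have "AE x in lborel. ennreal (f x) * indicator (ball y r) x = 0"
    by (subst (asm) nn_integral_0_iff_AE) (measurable, simp)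
  then have "AE x in lborel. x \<notin> ball y r"
    by eventually_elim (auto simp: indicator_def ennreal_eq_0_iff, meson f_pos not_le)
  then have "ball y r \<in> null_sets lborel"
    by (subst AE_iff_null_sets) auto
  then show False
    using content_ball_pos[OF assms, of y] by (simp add: measure_def null_sets_def)
qed

lemma emeasure_std_normal_vec_inner_ge_1_pos:
  fixes a :: "real^'n"
  assumes "a \<noteq> 0"
  shows "0 < emeasure std_normal_vec {y. 1 \<le> a \<bullet> y \<and> norm y \<le> 3 / norm a}"
proof -
  define y0 where "y0 = (2 / norm a ^ 2) *\<^sub>R a"
  have na: "0 < norm a"
    using assms by simp
  have "ball y0 (1 / norm a) \<subseteq> {y. 1 \<le> a \<bullet> y \<and> norm y \<le> 3 / norm a}"
  proof
    fix y assume "y \<in> ball y0 (1 / norm a)"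
    then have d: "norm (y - y0) < 1 / norm a"
      by (simp add: dist_norm norm_minus_commute)
    have "\<bar>a \<bullet> (y - y0)\<bar> \<le> norm a * norm (y - y0)"
      by (rule Cauchy_Schwarz_ineq2)
    also have "\<dots> \<le> 1"
      using d na by (simp add: field_simps)
    finally have "1 \<le> a \<bullet> y"
      using na by (simp add: y0_def inner_diff_right power2_norm_eq_inner[symmetric])
    moreover have "norm y \<le> norm y0 + norm (y - y0)"
      using norm_triangle_ineq[of y0 "y - y0"] by simp
    then have "norm y \<le> 3 / norm a"
      using d na by (simp add: y0_def power2_eq_square add_divide_distrib[symmetric])
    ultimately show "y \<in> {y. 1 \<le> a \<bullet> y \<and> norm y \<le> 3 / norm a}"
      by simp
  qed
  then have "emeasure std_normal_vec (ball y0 (1 / norm a)) \<le> emeasure std_normal_vec {y. 1 \<le> a \<bullet> y \<and> norm y \<le> 3 / norm a}"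
    by (intro emeasure_mono) auto
  then show ?thesis
    using emeasure_std_normal_vec_ball_pos[of "1 / norm a" y0] na by simp
qed

definition normalized_increment ::
  "(real \<Rightarrow> 'w \<Rightarrow> 'a::real_normed_vector) \<Rightarrow> real \<Rightarrow> real \<Rightarrow> 'w \<Rightarrow> 'a" where
  "normalized_increment B s t \<omega> = (1 / sqrt (t - s)) *\<^sub>R (B t \<omega> - B s \<omega>)"

lemma sets_normalized_increment_event:
  assumes "brownian_motion M B" "0 \<le> s" "0 \<le> t" "T \<in> sets borel"
  shows "{\<omega>\<in>space M. normalized_increment B s t \<omega> \<in> T} \<in> sets M"
proof -
  have [measurable]: "B s \<in> borel_measurable M" "B t \<in> borel_measurable M" "T \<in> sets borel"
    using assms by (auto simp: brownian_motion_def)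
  show ?thesis
    unfolding normalized_increment_def by measurable
qed

lemma emeasure_normalized_increment:
  fixes B :: "real \<Rightarrow> 'w \<Rightarrow> real^'n"
  assumes bm: "brownian_motion M B" and "0 \<le> s" "s < t" and T: "T \<in> sets borel"
  shows "emeasure M {\<omega>\<in>space M. normalized_increment B s t \<omega> \<in> T} = emeasure std_normal_vec T"
proof -
  define c where "c = sqrt (t - s)"
  have c: "0 < c"
    using assms by (simp add: c_def)
  define f where "f c y = ennreal (\<Prod>i\<in>UNIV. normal_density 0 c (y $ i))" for c and y :: "real^'n"
  have distr: "distributed M lborel (\<lambda>\<omega>. B t \<omega> - B s \<omega>) (f c)"
    using assms unfolding brownian_motion_def f_def c_def by blast
  define T' where "T' = (\<lambda>y. (1 / c) *\<^sub>R y) -` T"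
  have [measurable]: "T' \<in> sets borel"
    using measurable_sets[OF _ T, of "\<lambda>y. (1 / c) *\<^sub>R y" borel] unfolding T'_def by simp
  have density_scale: "ennreal (c ^ CARD('n)) * f c (c *\<^sub>R x) = f 1 x" for x
  proof -
    have "normal_density 0 c (c * x) = normal_density 0 1 x / c" for x
      using c unfolding normal_density_def by (simp add: power_mult_distrib real_sqrt_mult field_simps)
    then have "(\<Prod>i\<in>UNIV. normal_density 0 c ((c *\<^sub>R x) $ i)) = (\<Prod>i\<in>UNIV. normal_density 0 1 (x $ i)) / c ^ CARD('n)"
      by (simp add: prod_dividef)
    then show ?thesis
      using c by (simp add: f_def ennreal_mult'[symmetric] normal_density_nonneg prod_nonneg)
  qed
  have "{\<omega>\<in>space M. normalized_increment B s t \<omega> \<in> T} = (\<lambda>\<omega>. B t \<omega> - B s \<omega>) -` T' \<inter> space M"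
    by (auto simp: T'_def normalized_increment_def c_def)
  then have "emeasure M {\<omega>\<in>space M. normalized_increment B s t \<omega> \<in> T}
      = emeasure (distr M lborel (\<lambda>\<omega>. B t \<omega> - B s \<omega>)) T'"
    by (subst emeasure_distr) (use distr in \<open>auto simp: distributed_def\<close>)
  also have "\<dots> = emeasure (density lborel (f c)) T'"
    using distr by (simp add: distributed_def)
  also have "\<dots> = (\<integral>\<^sup>+y. f c y * indicator T' y \<partial>lborel)"
    using distr by (simp add: emeasure_density distributed_def)
  also have "\<dots> = (\<integral>\<^sup>+x. ennreal (\<bar>c\<bar> ^ DIM(real^'n)) * (f c (c *\<^sub>R x) * indicator T' (c *\<^sub>R x)) \<partial>lborel)"
    using distr c by (subst lborel_affine[of c 0]) (auto simp: nn_integral_density nn_integral_distr distributed_def)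
  also have "\<dots> = (\<integral>\<^sup>+x. f 1 x * indicator T x \<partial>lborel)"
    using c by (intro nn_integral_cong) (simp add: T'_def indicator_def density_scale[symmetric] mult.assoc)
  also have "\<dots> = emeasure std_normal_vec T"
    using T by (simp add: std_normal_vec_def emeasure_density f_def)
  finally show ?thesis .
qed

(* The total mass is read off from the law of a Brownian increment rather than computed. *)
lemma prob_space_std_normal_vec:
  fixes B :: "real \<Rightarrow> 'w \<Rightarrow> real^'n"
  assumes "brownian_motion M B"
  shows "prob_space (std_normal_vec :: (real^'n) measure)"
proof -
  interpret prob_space M
    using assms by (simp add: brownian_motion_def)
  have "emeasure std_normal_vec (UNIV :: (real^'n) set) = 1"
    using emeasure_normalized_increment[OF assms, of 0 1 UNIV] emeasure_space_1 by simp
  then show ?thesis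
    by (intro prob_spaceI) (simp add: std_normal_vec_def)
qed

lemma measure_normalized_increments_Inter:
  fixes B :: "real \<Rightarrow> 'w \<Rightarrow> real^'n"
  assumes bm: "brownian_motion M B" and ts: "strict_mono ts" "0 \<le> ts 0" and "0 < m"
    and T: "\<And>i. i < m \<Longrightarrow> T i \<in> sets borel"
  shows "measure M (\<Inter>i<m. {\<omega>\<in>space M. normalized_increment B (ts i) (ts (Suc i)) \<omega> \<in> T i})
    = (\<Prod>i<m. measure std_normal_vec (T i))"
proof -
  interpret prob_space M
    using bm by (simp add: brownian_motion_def)
  define X where "X i \<omega> = B (ts (Suc i)) \<omega> - B (ts i) \<omega>" for i \<omega>
  define T' where "T' i = (\<lambda>y. (1 / sqrt (ts (Suc i) - ts i)) *\<^sub>R y) -` T i" for i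
  have T': "T' i \<in> sets borel" if "i < m" for i
    using measurable_sets[OF _ T[OF that], of "\<lambda>y. (1 / sqrt (ts (Suc i) - ts i)) *\<^sub>R y" borel]
    unfolding T'_def by simp
  have event: "{\<omega>\<in>space M. normalized_increment B (ts i) (ts (Suc i)) \<omega> \<in> T i} = X i -` T' i \<inter> space M" for i
    by (auto simp: normalized_increment_def X_def T'_def)
  have ts_nonneg: "0 \<le> ts i" for i
    using ts by (metis le0 order_trans strict_mono_leD)
  have "indep_vars (\<lambda>_. borel) X {..<m}"
    using bm ts unfolding brownian_motion_def X_def by blast
  then have "indep_sets (\<lambda>i. {X i -` A \<inter> space M | A. A \<in> sets borel}) {..<m}"
    unfolding indep_vars_def2 by blast
  then have "prob (\<Inter>i<m. X i -` T' i \<inter> space M) = (\<Prod>i<m. prob (X i -` T' i \<inter> space M))"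
    using \<open>0 < m\<close> T' by (intro indep_setsD) auto
  also have "\<dots> = (\<Prod>i<m. measure std_normal_vec (T i))"
    using emeasure_normalized_increment[OF bm ts_nonneg strict_monoD[OF ts(1)] T]
    by (intro prod.cong) (auto simp: measure_def event[symmetric])
  finally show ?thesis
    by (simp add: event)
qed

section \<open>Small-time behaviour of Brownian motion\<close>

lemma AE_I_small_covers:
  assumes "finite_measure M"
    and small: "\<And>e. 0 < e \<Longrightarrow> \<exists>A\<in>sets M. {x\<in>space M. \<not> P x} \<subseteq> A \<and> measure M A \<le> e"
  shows "AE x in M. P x"
proof -
  interpret finite_measure M by (rule assms)
  have "\<forall>j::nat. \<exists>A. A \<in> sets M \<and> {x\<in>space M. \<not> P x} \<subseteq> A \<and> measure M A \<le> 1 / Suc j"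
    using small by (metis of_nat_0_less_iff zero_less_Suc zero_less_divide_1_iff)
  then obtain A where A: "\<And>j. A j \<in> sets M" "\<And>j. {x\<in>space M. \<not> P x} \<subseteq> A j"
      "\<And>j. measure M (A j) \<le> 1 / Suc j"
    by metis
  have le: "measure M (\<Inter>j. A j) \<le> 1 / Suc j" for j
    using A(1,3)[of j] finite_measure_mono[of "\<Inter>j. A j" "A j"] by force
  have "measure M (\<Inter>j. A j) \<le> 0"
  proof (rule field_le_epsilon)
    fix e :: real assume "0 < e"
    then obtain j where "1 / Suc j < e"
      by (rule nat_approx_posE)
    then show "measure M (\<Inter>j. A j) \<le> 0 + e"
      using le[of j] by simp
  qed
  then have "(\<Inter>j. A j) \<in> null_sets M"
    using A(1) by (auto simp: emeasure_eq_measure null_sets_def intro!: measure_nonneg antisym)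
  moreover have "{x\<in>space M. \<not> P x} \<subseteq> (\<Inter>j. A j)"
    using A(2) by blast
  ultimately show ?thesis
    by (rule AE_I')
qed

lemma finite_measure_norm_tail_tendsto_0:
  fixes \<mu> :: "'a::real_normed_vector measure"
  assumes "finite_measure \<mu>" and sets: "sets \<mu> = sets borel"
  shows "(\<lambda>j. measure \<mu> {y. real j < norm y}) \<longlonglongrightarrow> 0"
proof -
  have "open {y::'a. real j < norm y}" for j
    by (intro open_Collect_less continuous_intros)
  then have "range (\<lambda>j. {y::'a. real j < norm y}) \<subseteq> sets \<mu>"
    unfolding sets by auto
  moreover have "decseq (\<lambda>j. {y::'a. real j < norm y})"
    by (auto simp: decseq_def)
  ultimately have "(\<lambda>j. measure \<mu> {y. real j < norm y}) \<longlonglongrightarrow> measure \<mu> (\<Inter>j. {y. real j < norm y})"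
    by (intro finite_measure.finite_Lim_measure_decseq assms)
  moreover have "(\<Inter>j. {y::'a. real j < norm y}) = {}"
  proof (intro equalityI subsetI)
    fix y assume "y \<in> (\<Inter>j. {y::'a. real j < norm y})"
    then have "real (nat \<lceil>norm y\<rceil>) < norm y"
      by blast
    then show "y \<in> {}"
      using real_nat_ceiling_ge[of "norm y"] by linarith
  qed simp
  ultimately show ?thesis
    by simp
qed

lemma inner_gt_quadratic_of_decomposition:
  fixes a x y :: "'a::real_inner"
  assumes "0 < s" "0 < r" "r \<le> 1/2" and "0 \<le> n"
    and x: "1 \<le> a \<bullet> x" "norm x \<le> L" and y: "norm y \<le> \<Lambda>"
    and small_r: "norm a * \<Lambda> * r \<le> 1/4" and small_s: "n * s * ((L + \<Lambda>)^2 + 1) \<le> 1/4"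
  defines "z \<equiv> (sqrt (1 - r^2) * s) *\<^sub>R x + (r * s) *\<^sub>R y"
  shows "n * (norm z^2 + s^2) < a \<bullet> z"
proof -
  have "r^2 \<le> 1/4"
    using \<open>0 < r\<close> \<open>r \<le> 1/2\<close> power_mono[of r "1/2" 2] by (simp add: power_divide)
  then have "(3/4)^2 \<le> 1 - r^2"
    by (simp add: power_divide)
  then have "3/4 \<le> sqrt (1 - r^2)"
    by (rule real_le_rsqrt)
  then have h: "3/4 \<le> sqrt (1 - r^2)" "0 \<le> sqrt (1 - r^2)" "sqrt (1 - r^2) \<le> 1"
    using \<open>r^2 \<le> 1/4\<close> by auto
  have "3/4 * s \<le> sqrt (1 - r^2) * s * 1"
    using h \<open>0 < s\<close> by simp
  also have "\<dots> \<le> a \<bullet> ((sqrt (1 - r^2) * s) *\<^sub>R x)"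
    unfolding inner_scaleR_right using x h \<open>0 < s\<close> by (intro mult_left_mono) auto
  finally have ax: "3/4 * s \<le> a \<bullet> ((sqrt (1 - r^2) * s) *\<^sub>R x)" .
  have "\<bar>a \<bullet> ((r * s) *\<^sub>R y)\<bar> \<le> norm a * (r * s * norm y)"
    using Cauchy_Schwarz_ineq2[of a "(r * s) *\<^sub>R y"] \<open>0 < r\<close> \<open>0 < s\<close> by simp
  also have "\<dots> \<le> norm a * (r * s * \<Lambda>)"
    using y \<open>0 < r\<close> \<open>0 < s\<close> by (simp add: mult_left_mono)
  also have "\<dots> \<le> 1/4 * s"
    using mult_right_mono[OF small_r, of s] \<open>0 < s\<close> by (simp add: algebra_simps)
  finally have ay: "- (1/4 * s) \<le> a \<bullet> ((r * s) *\<^sub>R y)"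
    by linarith
  have "norm ((sqrt (1 - r^2) * s) *\<^sub>R x) \<le> L * s"
    using x h \<open>0 < s\<close> mult_mono[of "sqrt (1 - r^2)" 1 "norm x" L] by (simp add: algebra_simps)
  moreover have "norm ((r * s) *\<^sub>R y) \<le> \<Lambda> * s"
    using y \<open>0 < r\<close> \<open>r \<le> 1/2\<close> \<open>0 < s\<close> mult_mono[of r 1 "norm y" \<Lambda>] by (simp add: algebra_simps)
  ultimately have "norm z \<le> L * s + \<Lambda> * s"
    unfolding z_def by (intro norm_triangle_le add_mono)
  then have "norm z^2 \<le> ((L + \<Lambda>) * s)^2"
    by (intro power_mono) (auto simp: algebra_simps)
  then have "n * (norm z^2 + s^2) \<le> (n * s * ((L + \<Lambda>)^2 + 1)) * s"
    using \<open>0 \<le> n\<close> mult_left_mono by (fastforce simp: power_mult_distrib algebra_simps power2_eq_square)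
  also have "\<dots> \<le> 1/4 * s"
    using small_s \<open>0 < s\<close> by (intro mult_right_mono) auto
  also have "\<dots> < a \<bullet> z"
    using ax ay \<open>0 < s\<close> unfolding z_def inner_add_right by linarith
  finally show ?thesis .
qed

lemma inner_gt_quadratic_of_normalized_increments:
  fixes W :: "real \<Rightarrow> 'w \<Rightarrow> 'a::real_inner"
  assumes "0 < t" "0 < r" "r \<le> 1/2" and "0 \<le> n"
    and x: "1 \<le> a \<bullet> normalized_increment W (r^2 * t) t \<omega>" "norm (normalized_increment W (r^2 * t) t \<omega>) \<le> L"
    and y: "norm (normalized_increment W 0 (r^2 * t) \<omega>) \<le> \<Lambda>"
    and small_r: "norm a * \<Lambda> * r \<le> 1/4" and small_t: "n * sqrt t * ((L + \<Lambda>)^2 + 1) \<le> 1/4"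
  shows "n * (norm (W t \<omega> - W 0 \<omega>)^2 + t) < a \<bullet> (W t \<omega> - W 0 \<omega>)"
proof -
  have "r^2 < 1"
    using \<open>0 < r\<close> \<open>r \<le> 1/2\<close> by (simp add: power_less_one_iff)
  have "sqrt (t - r^2 * t) = sqrt (1 - r^2) * sqrt t"
    by (simp add: real_sqrt_mult[symmetric] algebra_simps)
  moreover have "sqrt (r^2 * t - 0) = r * sqrt t"
    using \<open>0 < r\<close> by (simp add: real_sqrt_mult)
  moreover have "0 < sqrt (1 - r^2) * sqrt t"
    using \<open>0 < t\<close> \<open>r^2 < 1\<close> by simp
  ultimately have "W t \<omega> - W 0 \<omega> = (sqrt (1 - r^2) * sqrt t) *\<^sub>R normalized_increment W (r^2 * t) t \<omega>
      + (r * sqrt t) *\<^sub>R normalized_increment W 0 (r^2 * t) \<omega>"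
    using \<open>0 < r\<close> \<open>0 < t\<close> by (simp add: normalized_increment_def)
  then show ?thesis
    using inner_gt_quadratic_of_decomposition[OF _ \<open>0 < r\<close> \<open>r \<le> 1/2\<close> \<open>0 \<le> n\<close> x y small_r small_t] \<open>0 < t\<close>
    by simp
qed

lemma geometric_grid_ending_at:
  fixes \<rho> d :: real
  assumes "0 < \<rho>" "\<rho> < 1" "0 < d"
  obtains ts where "strict_mono ts" "\<And>k. 0 < ts k" "\<And>k. ts k = \<rho> * ts (Suc k)" "ts N = d"
proof
  define ts where "ts k = d * \<rho>^N / \<rho>^k" for k
  show ts_pos: "0 < ts k" for k
    using assms by (simp add: ts_def)
  show ts_Suc: "ts k = \<rho> * ts (Suc k)" for k
    using assms by (simp add: ts_def)
  have "ts k < ts (Suc k)" for k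
    using ts_Suc[of k] ts_pos[of "Suc k"] \<open>\<rho> < 1\<close> by simp
  then show "strict_mono ts"
    by (simp add: strict_mono_Suc_iff)
  show "ts N = d"
    using assms by (simp add: ts_def)
qed

lemma fast_time_parameters:
  fixes a :: "'a::real_normed_vector"
  assumes "0 < n" "0 < \<delta>" "0 < \<Lambda>"
  obtains r d where "0 < r" "r \<le> 1/2" "norm a * \<Lambda> * r \<le> 1/4" "0 < d" "d \<le> \<delta>"
    "\<And>t. 0 \<le> t \<Longrightarrow> t \<le> d \<Longrightarrow> n * sqrt t * ((L + \<Lambda>)^2 + 1) \<le> 1/4"
proof
  define c where "c = (norm a + 1) * \<Lambda>"
  have c: "0 < c" "norm a * \<Lambda> \<le> c"
    using \<open>0 < \<Lambda>\<close> by (auto simp: c_def intro!: mult_pos_pos add_nonneg_pos)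
  show r: "0 < min (1/2) (1 / (4 * c))" "min (1/2) (1 / (4 * c)) \<le> 1/2"
    using c by auto
  have "norm a * \<Lambda> * min (1/2) (1 / (4 * c)) \<le> c * (1 / (4 * c))"
    using c r by (intro mult_mono) auto
  then show "norm a * \<Lambda> * min (1/2) (1 / (4 * c)) \<le> 1/4"
    using c by simp
  define K where "K = (L + \<Lambda>)^2 + 1"
  have K: "1 \<le> K"
    by (simp add: K_def)
  show "0 < min \<delta> ((1 / (4 * n * K))^2)" "min \<delta> ((1 / (4 * n * K))^2) \<le> \<delta>"
    using assms K by auto
  fix t assume t: "0 \<le> t" "t \<le> min \<delta> ((1 / (4 * n * K))^2)"
  then have "sqrt t \<le> 1 / (4 * n * K)"
    using real_sqrt_le_mono[of t "(1 / (4 * n * K))^2"] \<open>0 < n\<close> K by auto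
  then have "n * K * sqrt t \<le> n * K * (1 / (4 * n * K))"
    using \<open>0 < n\<close> K by (intro mult_left_mono) auto
  also have "\<dots> = 1/4"
    using \<open>0 < n\<close> K by simp
  finally show "n * sqrt t * ((L + \<Lambda>)^2 + 1) \<le> 1/4"
    by (simp add: K_def[symmetric] mult_ac)
qed

lemma measure_grid_cover_le:
  fixes B :: "real \<Rightarrow> 'w \<Rightarrow> real^'n" and \<Lambda> :: real
  assumes bm: "brownian_motion M B" and ts: "strict_mono ts" "\<And>k. 0 < ts k"
    and S: "S \<in> sets borel" and "0 < N"
  defines "A \<equiv> (\<Inter>k<N. {\<omega>\<in>space M. normalized_increment B (ts k) (ts (Suc k)) \<omega> \<in> - S})
    \<union> (\<Union>k<N. {\<omega>\<in>space M. normalized_increment B 0 (ts k) \<omega> \<in> {y. \<Lambda> < norm y}})"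
  shows "A \<in> sets M"
    and "measure M A \<le> (1 - measure std_normal_vec S)^N + N * measure std_normal_vec {y::real^'n. \<Lambda> < norm y}"
proof -
  interpret prob_space M
    using bm by (simp add: brownian_motion_def)
  interpret G: prob_space "std_normal_vec :: (real^'n) measure"
    using prob_space_std_normal_vec[OF bm] .
  define A0 where "A0 = (\<Inter>k<N. {\<omega>\<in>space M. normalized_increment B (ts k) (ts (Suc k)) \<omega> \<in> - S})"
  define A1 where "A1 k = {\<omega>\<in>space M. normalized_increment B 0 (ts k) \<omega> \<in> {y. \<Lambda> < norm y}}" for k
  have tail: "{y::real^'n. \<Lambda> < norm y} \<in> sets borel"
    by (intro borel_open open_Collect_less continuous_intros)
  have compl: "- S \<in> sets borel"
    using S by (rule borel_comp)
  have A1_sets: "A1 k \<in> sets M" for k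
    unfolding A1_def by (rule sets_normalized_increment_event[OF bm order_refl less_imp_le[OF ts(2)] tail])
  have A0_sets: "A0 \<in> sets M"
    unfolding A0_def using compl \<open>0 < N\<close>
    by (intro sets.finite_INT sets_normalized_increment_event[OF bm less_imp_le[OF ts(2)] less_imp_le[OF ts(2)]]) auto
  then show "A \<in> sets M"
    unfolding A_def A0_def[symmetric] A1_def[symmetric] using A1_sets by blast
  from compl have "measure M A0 = (\<Prod>k<N. measure std_normal_vec (- S))"
    unfolding A0_def by (rule measure_normalized_increments_Inter[OF bm ts(1) less_imp_le[OF ts(2)] \<open>0 < N\<close>])
  also have "\<dots> = (1 - measure std_normal_vec S)^N"
    using G.prob_compl[of S] S by (simp add: Compl_eq_Diff_UNIV)
  finally have A0: "measure M A0 = (1 - measure std_normal_vec S)^N" .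
  have A1: "measure M (A1 k) = measure std_normal_vec {y::real^'n. \<Lambda> < norm y}" for k
    using emeasure_normalized_increment[OF bm order_refl ts(2) tail] by (simp add: A1_def measure_def)
  have "measure M A \<le> measure M A0 + measure M (\<Union>k<N. A1 k)"
    unfolding A_def A0_def[symmetric] A1_def[symmetric] using A0_sets A1_sets by (intro measure_Un_le) auto
  also have "measure M (\<Union>k<N. A1 k) \<le> (\<Sum>k<N. measure M (A1 k))"
    using A1_sets by (intro measure_UNION_le) auto
  finally show "measure M A \<le> (1 - measure std_normal_vec S)^N + N * measure std_normal_vec {y::real^'n. \<Lambda> < norm y}"
    by (simp add: A0 A1)
qed

lemma brownian_motion_no_fast_time_cover:
  fixes B :: "real \<Rightarrow> 'w \<Rightarrow> real^'n" and a :: "real^'n"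
  assumes bm: "brownian_motion M B"
    and S: "S \<in> sets borel" "\<And>y. y \<in> S \<Longrightarrow> 1 \<le> a \<bullet> y \<and> norm y \<le> L"
    and "0 < n" "0 < \<delta>" "0 < N" "0 < \<Lambda>"
  obtains A where "A \<in> sets M"
    "{\<omega>\<in>space M. \<not> (\<exists>t\<in>{0<..\<delta>}. n * (norm (B t \<omega> - B 0 \<omega>)^2 + t) < a \<bullet> (B t \<omega> - B 0 \<omega>))} \<subseteq> A"
    "measure M A \<le> (1 - measure std_normal_vec S)^N + N * measure std_normal_vec {y::real^'n. \<Lambda> < norm y}"
proof -
  obtain r d where r: "0 < r" "r \<le> 1/2" "norm a * \<Lambda> * r \<le> 1/4" and d: "0 < d" "d \<le> \<delta>"
    and small_t: "\<And>t. 0 \<le> t \<Longrightarrow> t \<le> d \<Longrightarrow> n * sqrt t * ((L + \<Lambda>)^2 + 1) \<le> 1/4"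
    using fast_time_parameters[OF \<open>0 < n\<close> \<open>0 < \<delta>\<close> \<open>0 < \<Lambda>\<close>] by blast
  have "0 < r^2" "r^2 < 1"
    using r by (auto simp: power_less_one_iff)
  then obtain ts where ts: "strict_mono ts" "\<And>k. 0 < ts k" "\<And>k. ts k = r^2 * ts (Suc k)" "ts N = d"
    using geometric_grid_ending_at d(1) by blast
  let ?A = "(\<Inter>k<N. {\<omega>\<in>space M. normalized_increment B (ts k) (ts (Suc k)) \<omega> \<in> - S})
    \<union> (\<Union>k<N. {\<omega>\<in>space M. normalized_increment B 0 (ts k) \<omega> \<in> {y. \<Lambda> < norm y}})"
  have "{\<omega>\<in>space M. \<not> (\<exists>t\<in>{0<..\<delta>}. n * (norm (B t \<omega> - B 0 \<omega>)^2 + t) < a \<bullet> (B t \<omega> - B 0 \<omega>))} \<subseteq> ?A"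
  proof (rule subsetI, rule ccontr)
    fix \<omega> assume "\<omega> \<in> {\<omega>\<in>space M. \<not> (\<exists>t\<in>{0<..\<delta>}. n * (norm (B t \<omega> - B 0 \<omega>)^2 + t) < a \<bullet> (B t \<omega> - B 0 \<omega>))}"
      and not_covered: "\<omega> \<notin> ?A"
    then have \<omega>: "\<omega> \<in> space M"
      and slow: "\<not> (\<exists>t\<in>{0<..\<delta>}. n * (norm (B t \<omega> - B 0 \<omega>)^2 + t) < a \<bullet> (B t \<omega> - B 0 \<omega>))"
      by auto
    obtain k where k: "k < N" "normalized_increment B (ts k) (ts (Suc k)) \<omega> \<in> S"
      using not_covered \<omega> by auto
    define t where "t = ts (Suc k)"
    have t: "0 < t" "t \<le> d"
      using ts(2,4) k strict_mono_less_eq[OF ts(1), of "Suc k" N] by (auto simp: t_def)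
    have x: "1 \<le> a \<bullet> normalized_increment B (r^2 * t) t \<omega>" "norm (normalized_increment B (r^2 * t) t \<omega>) \<le> L"
      using S(2)[OF k(2)] unfolding t_def ts(3)[of k, symmetric] by auto
    have y: "norm (normalized_increment B 0 (r^2 * t) \<omega>) \<le> \<Lambda>"
      using not_covered k \<omega> unfolding t_def ts(3)[of k, symmetric] by (auto simp: not_less)
    have "n * (norm (B t \<omega> - B 0 \<omega>)^2 + t) < a \<bullet> (B t \<omega> - B 0 \<omega>)"
      using small_t[of t] t \<open>0 < n\<close> by (intro inner_gt_quadratic_of_normalized_increments[OF t(1) r(1,2) _ x y r(3)]) auto
    then show False
      using slow t d by auto
  qed
  then show thesis
    using that measure_grid_cover_le[OF bm ts(1,2) S(1) \<open>0 < N\<close>] by blast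
qed

lemma brownian_motion_AE_fast_time:
  fixes B :: "real \<Rightarrow> 'w \<Rightarrow> real^'n" and a :: "real^'n"
  assumes bm: "brownian_motion M B" and "a \<noteq> 0" "0 < n" "0 < \<delta>"
  shows "AE \<omega> in M. \<exists>t\<in>{0<..\<delta>}. n * (norm (B t \<omega> - B 0 \<omega>)^2 + t) < a \<bullet> (B t \<omega> - B 0 \<omega>)"
proof (rule AE_I_small_covers)
  show "finite_measure M"
    using bm by (simp add: brownian_motion_def prob_space.finite_measure)
  interpret G: prob_space "std_normal_vec :: (real^'n) measure"
    using prob_space_std_normal_vec[OF bm] .
  fix e :: real assume "0 < e"
  define S where "S = {y::real^'n. 1 \<le> a \<bullet> y \<and> norm y \<le> 3 / norm a}"
  have S_borel: "S \<in> sets borel"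
    unfolding S_def by measurable
  have "0 < measure std_normal_vec S"
    using emeasure_std_normal_vec_inner_ge_1_pos[OF \<open>a \<noteq> 0\<close>] by (simp add: S_def G.emeasure_eq_measure)
  then have "((\<lambda>N. (1 - measure std_normal_vec S)^N) \<longlongrightarrow> 0) sequentially"
    by (intro LIMSEQ_power_zero) auto
  then have "eventually (\<lambda>N. (1 - measure std_normal_vec S)^N < e / 2 \<and> 0 < N) sequentially"
    using \<open>0 < e\<close> by (intro eventually_conj order_tendstoD(2) eventually_gt_at_top) auto
  then obtain N where N: "(1 - measure std_normal_vec S)^N < e / 2" "0 < N"
    by (auto simp: eventually_sequentially)
  have "((\<lambda>j. real N * measure std_normal_vec {y::real^'n. real j < norm y}) \<longlongrightarrow> 0) sequentially"
    by (intro tendsto_mult_right_zero finite_measure_norm_tail_tendsto_0 G.finite_measure) simp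
  then have "eventually (\<lambda>j. N * measure std_normal_vec {y::real^'n. real j < norm y} < e / 2 \<and> 0 < j) sequentially"
    using \<open>0 < e\<close> by (intro eventually_conj order_tendstoD(2) eventually_gt_at_top) auto
  then obtain j where j: "N * measure std_normal_vec {y::real^'n. real j < norm y} < e / 2" "0 < j"
    by (auto simp: eventually_sequentially)
  have S: "\<And>y. y \<in> S \<Longrightarrow> 1 \<le> a \<bullet> y \<and> norm y \<le> 3 / norm a"
    by (simp add: S_def)
  from j(2) have "0 < real j"
    by simp
  then obtain A where "A \<in> sets M"
    "{\<omega>\<in>space M. \<not> (\<exists>t\<in>{0<..\<delta>}. n * (norm (B t \<omega> - B 0 \<omega>)^2 + t) < a \<bullet> (B t \<omega> - B 0 \<omega>))} \<subseteq> A"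
    "measure M A \<le> (1 - measure std_normal_vec S)^N + N * measure std_normal_vec {y::real^'n. real j < norm y}"
    using brownian_motion_no_fast_time_cover[OF bm S_borel S \<open>0 < n\<close> \<open>0 < \<delta>\<close> N(2)] by blast
  then show "\<exists>A\<in>sets M. {\<omega>\<in>space M. \<not> (\<exists>t\<in>{0<..\<delta>}. n * (norm (B t \<omega> - B 0 \<omega>)^2 + t) < a \<bullet> (B t \<omega> - B 0 \<omega>))} \<subseteq> A \<and> measure M A \<le> e"
    using N(1) j(1) by (intro bexI[of _ A]) auto
qed

lemma frequently_at_right_0_of_nat_witnesses:
  fixes q x :: "real \<Rightarrow> real"
  assumes q: "\<And>t. 0 < t \<Longrightarrow> 0 \<le> q t" and witnesses: "\<forall>n m::nat. \<exists>t\<in>{0<..1 / Suc m}. Suc n * q t < x t"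
  shows "\<exists>\<^sub>F t in at_right 0. K * q t < x t"
  unfolding frequently_def eventually_at_right_field
proof
  assume "\<exists>b>0. \<forall>t>0. t < b \<longrightarrow> \<not> K * q t < x t"
  then obtain b where "0 < b" and never: "\<forall>t>0. t < b \<longrightarrow> \<not> K * q t < x t"
    by blast
  obtain m where m: "1 / Suc m < b"
    using \<open>0 < b\<close> by (rule nat_approx_posE)
  obtain n where n: "K \<le> real n"
    using real_arch_simple by blast
  obtain t where t: "t \<in> {0<..1 / Suc m}" "Suc n * q t < x t"
    using witnesses by blast
  have "K * q t \<le> Suc n * q t"
    using n q t(1) by (intro mult_right_mono) auto
  then show False
    using never t m by (auto intro: le_less_trans less_le_trans)
qed

lemma brownian_motion_frequently_inner_gt_quadratic:
  fixes B :: "real \<Rightarrow> 'w \<Rightarrow> real^'n" and a :: "real^'n"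
  assumes bm: "brownian_motion M B" and "a \<noteq> 0"
  shows "AE \<omega> in M. \<forall>K. \<exists>\<^sub>F t in at_right 0. K * (norm (B t \<omega>)^2 + t) < a \<bullet> B t \<omega>"
proof -
  have "AE \<omega> in M. \<forall>n::nat. \<forall>m::nat. \<exists>t\<in>{0<..1 / Suc m}.
      Suc n * (norm (B t \<omega> - B 0 \<omega>)^2 + t) < a \<bullet> (B t \<omega> - B 0 \<omega>)"
    using assms by (intro AE_all_countable[THEN iffD2] allI brownian_motion_AE_fast_time) auto
  moreover have "AE \<omega> in M. B 0 \<omega> = 0"
    using bm by (auto simp: brownian_motion_def elim: AE_mp)
  ultimately show ?thesis
  proof eventually_elim
    case (elim \<omega>)
    then show ?case
      by (intro allI frequently_at_right_0_of_nat_witnesses[where q = "\<lambda>t. norm (B t \<omega>)^2 + t"]) simp_all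
  qed
qed

section \<open>Energy along Langevin paths\<close>

lemma differentiable_imp_Lipschitz_at:
  fixes F :: "'a::real_normed_vector \<Rightarrow> 'b::real_normed_vector"
  assumes "F differentiable (at x)"
  obtains L where "eventually (\<lambda>y. norm (F y - F x) \<le> L * dist y x) (nhds x)"
proof -
  obtain F' where F': "(F has_derivative F') (at x)"
    using assms unfolding differentiable_def by blast
  then obtain K where K: "\<And>h. norm (F' h) \<le> norm h * K"
    using bounded_linear.pos_bounded has_derivative_bounded_linear by blast
  obtain d where "0 < d" and d: "\<And>y. norm (y - x) < d \<Longrightarrow> norm (F y - F x - F' (y - x)) \<le> norm (y - x)"
    using F' unfolding has_derivative_at_alt by (metis mult_1 zero_less_one)
  have "norm (F y - F x) \<le> (K + 1) * dist y x" if "dist y x < d" for y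
  proof -
    have "norm (F y - F x) \<le> norm (F' (y - x)) + norm (F y - F x - F' (y - x))"
      by (metis add.commute diff_add_cancel norm_triangle_ineq)
    also have "\<dots> \<le> norm (y - x) * K + norm (y - x)"
      using that K[of "y - x"] d[of y] by (intro add_mono) (auto simp: dist_norm)
    finally show ?thesis by (simp add: dist_norm algebra_simps)
  qed
  then show thesis
    using \<open>0 < d\<close> by (intro that[of "K + 1"]) (auto simp: eventually_nhds_metric)
qed

lemma integral_norm_le_linear_at_right_0:
  fixes f :: "real \<Rightarrow> 'a::euclidean_space"
  assumes "continuous_on {0..} f"
  obtains C where "eventually (\<lambda>t. norm (integral {0..t} f) \<le> C * t) (at_right 0)"
proof -
  have f: "continuous_on {0..1} f"
    using assms by (rule continuous_on_subset) auto
  obtain C where C: "\<And>s. s \<in> {0..1} \<Longrightarrow> norm (f s) \<le> C"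
    using compact_imp_bounded[OF compact_continuous_image[OF f compact_Icc]]
    unfolding bounded_iff by (metis image_eqI)
  have "norm (integral {0..t} f) \<le> C * t" if "t \<in> {0<..<1}" for t
    using integral_bound[of 0 t f C] that C continuous_on_subset[OF f] by auto
  then show thesis
    using eventually_at_right_real[of 0 1] by (intro that[of C]) (auto elim: eventually_mono)
qed

lemma norm_power2_perturbation_le:
  fixes p y i :: "'a::real_inner"
  shows "\<bar>norm (p + \<sigma> *\<^sub>R y - i)^2 - norm p^2 - 2 * \<sigma> * (p \<bullet> y)\<bar>
    \<le> 2 * norm p * norm i + 2 * \<sigma>^2 * norm y^2 + 2 * norm i^2"
proof -
  define v where "v = \<sigma> *\<^sub>R y - i"
  have "norm (p + \<sigma> *\<^sub>R y - i)^2 - norm p^2 - 2 * \<sigma> * (p \<bullet> y) = norm v^2 - 2 * (p \<bullet> i)"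
    by (simp add: v_def power2_norm_eq_inner algebra_simps inner_commute)
  moreover have "\<bar>p \<bullet> i\<bar> \<le> norm p * norm i"
    by (rule Cauchy_Schwarz_ineq2)
  moreover have "0 \<le> norm v^2"
    by simp
  moreover have "norm v^2 \<le> (\<bar>\<sigma>\<bar> * norm y + norm i)^2"
    using norm_triangle_ineq4[of "\<sigma> *\<^sub>R y" i] by (intro power_mono) (auto simp: v_def)
  moreover have "(\<bar>\<sigma>\<bar> * norm y + norm i)^2 \<le> 2 * \<sigma>^2 * norm y^2 + 2 * norm i^2"
    using sum_squares_bound[of "\<bar>\<sigma>\<bar> * norm y" "norm i"]
    by (simp add: power2_eq_square algebra_simps)
  ultimately show ?thesis
    by linarith
qed

lemma integral_path_Lipschitz_at_right_0:
  fixes F :: "'a::euclidean_space \<Rightarrow> real" and Q P :: "real \<Rightarrow> 'a"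
  assumes F: "F differentiable (at q0)"
    and Q: "continuous_on {0..} Q" "\<And>t. 0 \<le> t \<Longrightarrow> Q t = q0 + integral {0..t} P"
    and P: "continuous_on {0..} P"
  obtains C where "eventually (\<lambda>t. \<bar>F (Q t) - F q0\<bar> \<le> C * t) (at_right 0)"
proof -
  obtain C where C: "eventually (\<lambda>t. norm (integral {0..t} P) \<le> C * t) (at_right 0)"
    using integral_norm_le_linear_at_right_0[OF P] .
  obtain L where "eventually (\<lambda>x. norm (F x - F q0) \<le> L * dist x q0) (nhds q0)"
    using differentiable_imp_Lipschitz_at[OF F] .
  moreover have "(Q \<longlongrightarrow> Q 0) (at 0 within {0..})"
    using Q(1) by (simp add: continuous_on_def)
  then have "(Q \<longlongrightarrow> q0) (at_right 0)"
    using Q(2)[of 0] by (auto elim: tendsto_within_subset)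
  ultimately have FL: "eventually (\<lambda>t. \<bar>F (Q t) - F q0\<bar> \<le> L * dist (Q t) q0) (at_right 0)"
    using eventually_compose_filterlim[where P = "\<lambda>x. norm (F x - F q0) \<le> L * dist x q0" and f = Q] by simp
  have "eventually (\<lambda>t. \<bar>F (Q t) - F q0\<bar> \<le> (\<bar>L\<bar> * \<bar>C\<bar>) * t) (at_right 0)"
    using eventually_at_right_less[of 0] C FL
  proof eventually_elim
    case (elim t)
    have "dist (Q t) q0 \<le> C * t"
      using elim Q(2)[of t] by (simp add: dist_norm)
    also have "\<dots> \<le> \<bar>C\<bar> * t"
      using elim by (intro mult_right_mono) auto
    finally have "L * dist (Q t) q0 \<le> \<bar>L\<bar> * (\<bar>C\<bar> * t)"
      using mult_right_mono[OF abs_ge_self[of L] zero_le_dist] by (meson abs_ge_zero mult_left_mono order_trans)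
    then show ?case
      using elim by (simp add: mult.assoc)
  qed
  then show thesis
    by (rule that)
qed

lemma norm_square_expansion_at_right_0:
  fixes P D Y :: "real \<Rightarrow> 'a::euclidean_space"
  assumes P: "\<And>t. 0 \<le> t \<Longrightarrow> P t = p0 - integral {0..t} D + \<sigma> *\<^sub>R Y t"
    and D: "continuous_on {0..} D"
  obtains C where "eventually (\<lambda>t. \<bar>norm (P t)^2 - norm p0^2 - 2 * \<sigma> * (p0 \<bullet> Y t)\<bar> \<le> C * (norm (Y t)^2 + t)) (at_right 0)"
proof -
  obtain G where G: "eventually (\<lambda>t. norm (integral {0..t} D) \<le> G * t) (at_right 0)"
    using integral_norm_le_linear_at_right_0[OF D] .
  define C where "C = 2 * norm p0 * \<bar>G\<bar> + 2 * \<sigma>^2 + 2 * G^2"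
  have "eventually (\<lambda>t. \<bar>norm (P t)^2 - norm p0^2 - 2 * \<sigma> * (p0 \<bullet> Y t)\<bar> \<le> C * (norm (Y t)^2 + t)) (at_right 0)"
    using eventually_at_right_real[OF zero_less_one] G
  proof eventually_elim
    case (elim t)
    define I where "I = integral {0..t} D"
    have t: "0 < t" "t < 1"
      using elim by auto
    have "norm I \<le> G * t"
      using elim by (simp add: I_def)
    also have "\<dots> \<le> \<bar>G\<bar> * t"
      using t by (intro mult_right_mono) auto
    finally have I: "norm I \<le> \<bar>G\<bar> * t" .
    have "norm I^2 \<le> (\<bar>G\<bar> * t)^2"
      using I by (intro power_mono) auto
    also have "\<dots> = G^2 * (t * t)"
      by (simp add: power_mult_distrib power2_eq_square)
    also have "\<dots> \<le> G^2 * t"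
      using t by (intro mult_left_mono) (auto simp: mult_left_le_one_le)
    finally have I2: "norm I^2 \<le> G^2 * t" .
    have "2 * norm p0 * norm I \<le> 2 * norm p0 * (\<bar>G\<bar> * t)"
      using I by (intro mult_left_mono) auto
    moreover have Pt: "P t = p0 + \<sigma> *\<^sub>R Y t - I"
      using P[of t] t by (simp add: I_def)
    moreover have "C * (norm (Y t)^2 + t) = 2 * norm p0 * (\<bar>G\<bar> * t) + 2 * \<sigma>^2 * norm (Y t)^2 + 2 * G^2 * t
        + (2 * norm p0 * \<bar>G\<bar> * norm (Y t)^2 + 2 * \<sigma>^2 * t + 2 * G^2 * norm (Y t)^2)"
      by (simp add: C_def algebra_simps)
    moreover have "0 \<le> 2 * norm p0 * \<bar>G\<bar> * norm (Y t)^2 + 2 * \<sigma>^2 * t + 2 * G^2 * norm (Y t)^2"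
      using t by (intro add_nonneg_nonneg mult_nonneg_nonneg) auto
    ultimately show ?case
      using norm_power2_perturbation_le[of p0 \<sigma> "Y t" I] I2 unfolding Pt by linarith
  qed
  then show thesis
    by (rule that)
qed

lemma energy_expansion_at_right_0:
  fixes F :: "'a::euclidean_space \<Rightarrow> real" and Q P D Y :: "real \<Rightarrow> 'a"
  assumes F: "F differentiable (at q0)"
    and Q: "continuous_on {0..} Q" "\<And>t. 0 \<le> t \<Longrightarrow> Q t = q0 + integral {0..t} P"
    and P: "continuous_on {0..} P" "\<And>t. 0 \<le> t \<Longrightarrow> P t = p0 - integral {0..t} D + \<sigma> *\<^sub>R Y t"
    and D: "continuous_on {0..} D"
  obtains K where "eventually (\<lambda>t. \<bar>F (Q t) + c * norm (P t)^2 - (F q0 + c * norm p0^2) - 2 * c * \<sigma> * (p0 \<bullet> Y t)\<bar>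
    \<le> K * (norm (Y t)^2 + t)) (at_right 0)"
proof -
  obtain C1 where C1: "eventually (\<lambda>t. \<bar>F (Q t) - F q0\<bar> \<le> C1 * t) (at_right 0)"
    using integral_path_Lipschitz_at_right_0[OF F Q P(1)] .
  obtain C2 where C2: "eventually (\<lambda>t. \<bar>norm (P t)^2 - norm p0^2 - 2 * \<sigma> * (p0 \<bullet> Y t)\<bar> \<le> C2 * (norm (Y t)^2 + t)) (at_right 0)"
    using norm_square_expansion_at_right_0[OF P(2) D] .
  have "eventually (\<lambda>t. \<bar>F (Q t) + c * norm (P t)^2 - (F q0 + c * norm p0^2) - 2 * c * \<sigma> * (p0 \<bullet> Y t)\<bar>
      \<le> (\<bar>C1\<bar> + \<bar>c\<bar> * \<bar>C2\<bar>) * (norm (Y t)^2 + t)) (at_right 0)"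
    using eventually_at_right_less[of 0] C1 C2
  proof eventually_elim
    case (elim t)
    define \<Delta> where "\<Delta> = norm (P t)^2 - norm p0^2 - 2 * \<sigma> * (p0 \<bullet> Y t)"
    have "F (Q t) + c * norm (P t)^2 - (F q0 + c * norm p0^2) - 2 * c * \<sigma> * (p0 \<bullet> Y t) = (F (Q t) - F q0) + c * \<Delta>"
      by (simp add: \<Delta>_def algebra_simps)
    moreover have "C1 * t \<le> \<bar>C1\<bar> * (norm (Y t)^2 + t)"
      using elim by (intro mult_mono) auto
    moreover have "\<bar>c * \<Delta>\<bar> \<le> \<bar>c\<bar> * (\<bar>C2\<bar> * (norm (Y t)^2 + t))"
      unfolding abs_mult using elim by (intro mult_left_mono order_trans[OF _ mult_right_mono[OF abs_ge_self]]) (auto simp: \<Delta>_def)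
    ultimately show ?case
      using elim abs_triangle_ineq[of "F (Q t) - F q0" "c * \<Delta>"] by (simp add: algebra_simps)
  qed
  then show thesis
    by (rule that)
qed

lemma SUP_gt_INF_lt_of_expansion:
  fixes h :: "real \<Rightarrow> real" and Y :: "real \<Rightarrow> 'a::real_inner"
  assumes "continuous_on {0..\<delta>} h" "0 < \<delta>" "0 < \<alpha>"
    and expansion: "eventually (\<lambda>t. \<bar>h t - h0 - \<alpha> * (a \<bullet> Y t)\<bar> \<le> K * (norm (Y t)^2 + t)) (at_right 0)"
    and up: "\<forall>K. \<exists>\<^sub>F t in at_right 0. K * (norm (Y t)^2 + t) < a \<bullet> Y t"
    and down: "\<forall>K. \<exists>\<^sub>F t in at_right 0. K * (norm (Y t)^2 + t) < (- a) \<bullet> Y t"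
  shows "(SUP t\<in>{0..\<delta>}. h t) > h0 \<and> (INF t\<in>{0..\<delta>}. h t) < h0"
proof
  have bdd: "bounded (h ` {0..\<delta>})"
    by (intro compact_imp_bounded compact_continuous_image assms(1) compact_Icc)
  have near: "eventually (\<lambda>t. t \<in> {0..\<delta>} \<and> \<bar>h t - h0 - \<alpha> * (a \<bullet> Y t)\<bar> \<le> K * (norm (Y t)^2 + t)) (at_right 0)"
    using eventually_at_right_real[OF \<open>0 < \<delta>\<close>] expansion by eventually_elim auto
  have scale: "K * q < \<alpha> * x" if "K / \<alpha> * q < x" for q x
    using mult_strict_left_mono[OF that \<open>0 < \<alpha>\<close>] \<open>0 < \<alpha>\<close> by simp
  have "\<exists>\<^sub>F t in at_right 0. t \<in> {0..\<delta>} \<and> h0 < h t"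
    using up[rule_format, of "K / \<alpha>"]
  proof (rule frequently_mp[rotated])
    show "eventually (\<lambda>t. K / \<alpha> * (norm (Y t)^2 + t) < a \<bullet> Y t \<longrightarrow> t \<in> {0..\<delta>} \<and> h0 < h t) (at_right 0)"
      using near by eventually_elim (use scale abs_le_D2 in fastforce)
  qed
  then obtain t where "t \<in> {0..\<delta>}" "h0 < h t"
    by (auto dest: frequently_ex)
  then show "(SUP t\<in>{0..\<delta>}. h t) > h0"
    using bdd by (meson bounded_imp_bdd_above cSUP_upper less_le_trans)
  have "\<exists>\<^sub>F t in at_right 0. t \<in> {0..\<delta>} \<and> h t < h0"
    using down[rule_format, of "K / \<alpha>"]
  proof (rule frequently_mp[rotated])
    show "eventually (\<lambda>t. K / \<alpha> * (norm (Y t)^2 + t) < (- a) \<bullet> Y t \<longrightarrow> t \<in> {0..\<delta>} \<and> h t < h0) (at_right 0)"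
      using near by eventually_elim (use scale abs_le_D1 in fastforce)
  qed
  then obtain t where "t \<in> {0..\<delta>}" "h t < h0"
    by (auto dest: frequently_ex)
  then show "(INF t\<in>{0..\<delta>}. h t) < h0"
    using bdd by (meson bounded_imp_bdd_below cINF_lower le_less_trans)
qed

lemma langevin_energy_crosses_level:
  fixes F :: "'a::euclidean_space \<Rightarrow> real" and Q P D Y :: "real \<Rightarrow> 'a"
  assumes F: "continuous_on UNIV F" "F differentiable (at q0)"
    and Q: "continuous_on {0..} Q" "\<And>t. 0 \<le> t \<Longrightarrow> Q t = q0 + integral {0..t} P"
    and P: "continuous_on {0..} P" "\<And>t. 0 \<le> t \<Longrightarrow> P t = p0 - integral {0..t} D + \<sigma> *\<^sub>R Y t"
    and D: "continuous_on {0..} D"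
    and "0 < c" "0 < \<sigma>" "0 < \<delta>"
    and up: "\<forall>K. \<exists>\<^sub>F t in at_right 0. K * (norm (Y t)^2 + t) < p0 \<bullet> Y t"
    and down: "\<forall>K. \<exists>\<^sub>F t in at_right 0. K * (norm (Y t)^2 + t) < (- p0) \<bullet> Y t"
  shows "(SUP t\<in>{0..\<delta>}. F (Q t) + c * norm (P t)^2) > F q0 + c * norm p0^2
    \<and> (INF t\<in>{0..\<delta>}. F (Q t) + c * norm (P t)^2) < F q0 + c * norm p0^2"
proof -
  obtain K where "eventually (\<lambda>t. \<bar>F (Q t) + c * norm (P t)^2 - (F q0 + c * norm p0^2) - 2 * c * \<sigma> * (p0 \<bullet> Y t)\<bar>
      \<le> K * (norm (Y t)^2 + t)) (at_right 0)"
    using energy_expansion_at_right_0[OF F(2) Q P D] .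
  moreover have "continuous_on {0..\<delta>} (\<lambda>t. F (Q t) + c * norm (P t)^2)"
  proof -
    have "continuous_on {0..\<delta>} Q" "continuous_on {0..\<delta>} P"
      using Q(1) P(1) by (auto elim: continuous_on_subset)
    then show ?thesis
      by (intro continuous_on_add continuous_on_mult_left continuous_on_power continuous_on_norm
          continuous_on_compose2[OF F(1)]) auto
  qed
  moreover have "0 < 2 * c * \<sigma>"
    using \<open>0 < c\<close> \<open>0 < \<sigma>\<close> by simp
  ultimately show ?thesis
    using SUP_gt_INF_lt_of_expansion[OF _ \<open>0 < \<delta>\<close> _ _ up down] by blast
qed

lemma langevin_solution_energy_crosses_level:
  fixes F :: "real^'n \<Rightarrow> real" and B q p :: "real \<Rightarrow> 'w \<Rightarrow> real^'n"
  assumes bm: "brownian_motion M B" and sol: "langevin_solution M gU \<gamma> \<epsilon> B q0 p0 q p"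
    and gU: "continuous_on UNIV gU" and "0 < \<gamma>" "0 < \<epsilon>" "p0 \<noteq> 0"
    and F: "continuous_on UNIV F" "F differentiable (at q0)" and "0 < c" "0 < \<delta>"
  shows "AE \<omega> in M. (SUP t\<in>{0..\<delta>}. F (q t \<omega>) + c * norm (p t \<omega>)^2) > F q0 + c * norm p0^2
    \<and> (INF t\<in>{0..\<delta>}. F (q t \<omega>) + c * norm (p t \<omega>)^2) < F q0 + c * norm p0^2"
proof -
  define \<sigma> where "\<sigma> = sqrt (2 * \<gamma> * \<epsilon>)"
  have "0 < \<sigma>"
    using \<open>0 < \<gamma>\<close> \<open>0 < \<epsilon>\<close> by (simp add: \<sigma>_def)
  have "AE \<omega> in M. continuous_on {0..} (\<lambda>t. q t \<omega>) \<and> continuous_on {0..} (\<lambda>t. p t \<omega>) \<and>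
      (\<forall>t\<ge>0. q t \<omega> = q0 + integral {0..t} (\<lambda>s. p s \<omega>) \<and>
        p t \<omega> = p0 - integral {0..t} (\<lambda>s. gU (q s \<omega>) + \<gamma> *\<^sub>R p s \<omega>) + \<sigma> *\<^sub>R B t \<omega>)"
    using sol unfolding langevin_solution_def \<sigma>_def by (rule conjunct2)
  moreover have "AE \<omega> in M. \<forall>K. \<exists>\<^sub>F t in at_right 0. K * (norm (B t \<omega>)^2 + t) < p0 \<bullet> B t \<omega>"
    by (rule brownian_motion_frequently_inner_gt_quadratic[OF bm \<open>p0 \<noteq> 0\<close>])
  moreover have "AE \<omega> in M. \<forall>K. \<exists>\<^sub>F t in at_right 0. K * (norm (B t \<omega>)^2 + t) < (- p0) \<bullet> B t \<omega>"
    by (rule brownian_motion_frequently_inner_gt_quadratic[OF bm]) (use \<open>p0 \<noteq> 0\<close> in simp)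
  ultimately show ?thesis
  proof eventually_elim
    case (elim \<omega>)
    then have qc: "continuous_on {0..} (\<lambda>t. q t \<omega>)" and pc: "continuous_on {0..} (\<lambda>t. p t \<omega>)"
      and eqs: "\<forall>t\<ge>0. q t \<omega> = q0 + integral {0..t} (\<lambda>s. p s \<omega>) \<and>
        p t \<omega> = p0 - integral {0..t} (\<lambda>s. gU (q s \<omega>) + \<gamma> *\<^sub>R p s \<omega>) + \<sigma> *\<^sub>R B t \<omega>"
      by blast+
    have "continuous_on {0..} (\<lambda>s. gU (q s \<omega>) + \<gamma> *\<^sub>R p s \<omega>)"
      using qc pc by (intro continuous_on_add continuous_on_scaleR continuous_on_const
          continuous_on_compose2[OF gU]) auto
    then show ?case
      using eqs by (intro langevin_energy_crosses_level[OF F qc _ pc _ _ \<open>0 < c\<close> \<open>0 < \<sigma>\<close> \<open>0 < \<delta>\<close> elim(2,3)]) blast+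
  qed
qed

theorem lemma4p1:
  fixes U :: "real^'n \<Rightarrow> real" and gU :: "real^'n \<Rightarrow> real^'n" and HU :: "real^'n \<Rightarrow> real^'n^'n"
    and \<gamma> \<beta> \<epsilon> E :: real and q0 p0 :: "real^'n"
    and M :: "'w measure" and B q p :: "real \<Rightarrow> 'w \<Rightarrow> real^'n"
  assumes "\<gamma> > 0" and "\<beta> > 0"
    and "C2_with U gU HU" and "double_well_morse U gU HU" and "\<forall>y. U y \<ge> 0"
    and "\<exists>c>0. eventually (\<lambda>y. (y \<bullet> gU y) / (norm y ^ 2 + U y) \<ge> c) at_infinity"
    and "\<exists>c>0. eventually (\<lambda>y. norm (gU y) - \<beta> * laplacian_of HU y \<ge> c) at_infinity"
    and "\<epsilon> > 0" and "E > 0" and "p0 \<noteq> 0"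
    and "brownian_motion M B"
    and "langevin_solution M gU \<gamma> \<epsilon> B q0 p0 q p"
  shows "(U q0 + norm p0 ^ 2 / 2 = E \<longrightarrow>
            (\<forall>\<delta>>0. AE \<omega> in M.
               (SUP t\<in>{0..\<delta>}. U (q t \<omega>) + norm (p t \<omega>) ^ 2 / 2) > E \<and>
               (INF t\<in>{0..\<delta>}. U (q t \<omega>) + norm (p t \<omega>) ^ 2 / 2) < E))
       \<and> (\<forall>z::real^'n. norm (q0 - z) ^ 2 + norm p0 ^ 2 = E \<longrightarrow>
            (\<forall>\<delta>>0. AE \<omega> in M.
               (SUP t\<in>{0..\<delta>}. norm (q t \<omega> - z) ^ 2 + norm (p t \<omega>) ^ 2) > E \<and>
               (INF t\<in>{0..\<delta>}. norm (q t \<omega> - z) ^ 2 + norm (p t \<omega>) ^ 2) < E))"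
proof -
  note crossing = langevin_solution_energy_crosses_level[OF assms(11,12) _ assms(1,8,10)]
  have "\<And>x. (U has_derivative (\<lambda>h. gU x \<bullet> h)) (at x)" "\<And>x. (gU has_derivative (\<lambda>h. HU x *v h)) (at x)"
    using assms(3) by (auto simp: C2_with_def)
  then have "continuous_on UNIV U" "continuous_on UNIV gU" "U differentiable (at q0)"
    by (auto intro!: continuous_at_imp_continuous_on has_derivative_continuous simp: differentiable_def)
  moreover have "continuous_on UNIV (\<lambda>x. norm (x - z)^2)" "(\<lambda>x. norm (x - z)^2) differentiable (at q0)" for z
    unfolding power2_norm_eq_inner by (intro continuous_intros derivative_intros differentiable_inner)+
  ultimately show ?thesis
    using crossing[of U "1/2"] crossing[of "\<lambda>x. norm (x - _)^2" 1] by auto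
qed

end
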